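(* Let $H$ be a Hilbert space and $U_{ik}\in B(H)$, $i,k=1,\dots,n$, operators satisfying relations (R1)–(R5). Then every $U_{ik}$ is normal: $U_{ik}U_{ik}^*=U_{ik}^*U_{ik}$ for all $i,k$.
   Context: $n\ge2$, $\theta\in M_n(\mathbb R)$ skew-symmetric, $\omega_{ij}=e^{2\pi i\theta_{ij}}$. Relations, for all $i,j,k,l\in\{1,\dots,n\}$: (R1) $U_{ik}U_{jl}+\omega_{ji}U_{jk}U_{il}=\omega_{kl}U_{il}U_{jk}+\omega_{ji}\omega_{kl}U_{jl}U_{ik}$; (R2) $\sum_iU_{ik}U_{il}^*=\delta_{kl}1$; (R3) $\sum_iU_{il}^*U_{ik}=\delta_{kl}1$; (R4) $U_{jk}U_{ik}^*=0$ for $i\neq j$; (R5) $U_{ik}^*U_{jk}=0$ for $i\neq j$. *)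

theory Defs
  imports "HOL-Analysis.Analysis"
begin

text \<open>A complex Hilbert space is modelled as a carrier type 'a (an abelian group)
  together with a complex scalar multiplication sc and an inner product ip,
  linear in the first and conjugate-linear in the second argument.\<close>

definition hnorm :: "('a \<Rightarrow> 'a \<Rightarrow> complex) \<Rightarrow> 'a \<Rightarrow> real" where
  "hnorm ip x = sqrt (Re (ip x x))"

definition hilbert_space ::
  "(complex \<Rightarrow> 'a::ab_group_add \<Rightarrow> 'a) \<Rightarrow> ('a \<Rightarrow> 'a \<Rightarrow> complex) \<Rightarrow> bool" where
  "hilbert_space sc ip \<longleftrightarrow>
     vector_space sc \<and>
     (\<forall>x y z. ip (x + y) z = ip x z + ip y z) \<and>
     (\<forall>c x y. ip (sc c x) y = c * ip x y) \<and>
     (\<forall>x y. ip y x = cnj (ip x y)) \<and>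
     (\<forall>x. Im (ip x x) = 0 \<and> Re (ip x x) \<ge> 0) \<and>
     (\<forall>x. ip x x = 0 \<longrightarrow> x = 0) \<and>
     (\<forall>X :: nat \<Rightarrow> 'a.
        (\<forall>e>0. \<exists>N. \<forall>m\<ge>N. \<forall>k\<ge>N. hnorm ip (X m - X k) < e) \<longrightarrow>
        (\<exists>L. (\<lambda>k. hnorm ip (X k - L)) \<longlonglongrightarrow> 0))"

definition bounded_op ::
  "(complex \<Rightarrow> 'a::ab_group_add \<Rightarrow> 'a) \<Rightarrow> ('a \<Rightarrow> 'a \<Rightarrow> complex) \<Rightarrow> ('a \<Rightarrow> 'a) \<Rightarrow> bool" where
  "bounded_op sc ip T \<longleftrightarrow>
     Vector_Spaces.linear sc sc T \<and> (\<exists>K. \<forall>x. hnorm ip (T x) \<le> K * hnorm ip x)"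

definition is_adjoint :: "('a \<Rightarrow> 'a \<Rightarrow> complex) \<Rightarrow> ('a \<Rightarrow> 'a) \<Rightarrow> ('a \<Rightarrow> 'a) \<Rightarrow> bool" where
  "is_adjoint ip T S \<longleftrightarrow> (\<forall>x y. ip (T x) y = ip x (S y))"

end

theory Submission
  imports Defs
begin

text \<open>Fix a row i. Relations (R2)--(R5) make every U_ik a partial isometry, and the
  projections U_il* U_il (l varying) are mutually orthogonal; their sum R_i is therefore a
  projection, and by (R3) the R_i add up to n times the identity, which forces every R_i
  to be the identity. Dually, the U_il U_il* add up to the identity. Relation (R1) with
  i = j says that the entries of one row commute up to a phase; together with the
  orthogonality this kills all products U_ik U_il and U_ik* U_il* with k \<noteq> l. Writing
  P = U_ik U_ik* and Q = U_ik* U_ik and inserting the two row identities gives P = PQ and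
  Q = QP, and two self-adjoint operators with these properties coincide.\<close>

lemma sum_eq_single:
  assumes "finite A" "a \<in> A" "\<And>b. b \<in> A \<Longrightarrow> b \<noteq> a \<Longrightarrow> f b = 0"
  shows "sum f A = f a"
proof -
  have "sum f A = f a + sum f (A - {a})" using assms by (simp add: sum.remove)
  also have "sum f (A - {a}) = 0" using assms by (intro sum.neutral) auto
  finally show ?thesis by simp
qed

definition is_projection :: "('a \<Rightarrow> 'a \<Rightarrow> complex) \<Rightarrow> ('a \<Rightarrow> 'a) \<Rightarrow> bool" where
  "is_projection ip P \<longleftrightarrow> is_adjoint ip P P \<and> (\<forall>x. P (P x) = P x)"

locale complex_inner_product =
  fixes sc :: "complex \<Rightarrow> 'a::ab_group_add \<Rightarrow> 'a"
    and ip :: "'a \<Rightarrow> 'a \<Rightarrow> complex"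
  assumes ip_add_left: "ip (x + y) z = ip x z + ip y z"
    and ip_scale_left: "ip (sc c x) y = c * ip x y"
    and ip_cnj_commute: "ip y x = cnj (ip x y)"
    and ip_self_Im: "Im (ip x x) = 0"
    and ip_self_Re_nonneg: "Re (ip x x) \<ge> 0"
    and ip_self_eq_zero: "ip x x = 0 \<Longrightarrow> x = 0"

lemma hilbert_space_complex_inner_product:
  "hilbert_space sc ip \<Longrightarrow> complex_inner_product sc ip"
  unfolding hilbert_space_def complex_inner_product_def
  by (elim conjE) (intro conjI allI impI; blast)

context complex_inner_product
begin

lemma ip_add_right: "ip x (y + z) = ip x y + ip x z"
  by (metis ip_cnj_commute ip_add_left complex_cnj_add)

lemma ip_zero_left: "ip 0 y = 0"
  using ip_add_left[of 0 0 y] by simp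

lemma ip_zero_right: "ip y 0 = 0"
  by (metis ip_cnj_commute ip_zero_left complex_cnj_zero)

lemma ip_diff_left: "ip (x - y) z = ip x z - ip y z"
  using ip_add_left[of "x - y" y z] by simp

lemma ip_diff_right: "ip z (x - y) = ip z x - ip z y"
  using ip_add_right[of z "x - y" y] by simp

lemma ip_sum_left: "ip (sum f A) y = (\<Sum>a\<in>A. ip (f a) y)"
  by (induct A rule: infinite_finite_induct) (auto simp: ip_zero_left ip_add_left)

lemma ip_sum_right: "ip y (sum f A) = (\<Sum>a\<in>A. ip y (f a))"
  by (induct A rule: infinite_finite_induct) (auto simp: ip_zero_right ip_add_right)

lemma ip_scale_right: "ip x (sc c y) = cnj c * ip x y"
  by (metis ip_cnj_commute ip_scale_left complex_cnj_mult)

lemma ip_eqI_right: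
  assumes "\<And>x. ip x y = ip x z"
  shows "y = z"
proof -
  have "ip (y - z) (y - z) = 0" by (simp add: ip_diff_right assms)
  then show ?thesis using ip_self_eq_zero by fastforce
qed

lemma ip_eqI_left:
  assumes "\<And>x. ip y x = ip z x"
  shows "y = z"
  by (rule ip_eqI_right) (metis assms ip_cnj_commute)

lemma scale_one: "sc 1 x = x"
  by (rule ip_eqI_left) (simp add: ip_scale_left)

lemma double_cancel:
  fixes x y :: 'a
  assumes "x + x = y + y"
  shows "x = y"
proof (rule ip_eqI_left)
  fix z
  have "2 * ip x z = 2 * ip y z"
    using arg_cong[OF assms, of "\<lambda>v. ip v z"] by (simp add: ip_add_left)
  then show "ip x z = ip y z" by simp
qed

lemma is_adjoint_sym: "is_adjoint ip A B \<Longrightarrow> is_adjoint ip B A"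
  unfolding is_adjoint_def by (metis ip_cnj_commute)

lemma is_adjoint_comp:
  "is_adjoint ip A B \<Longrightarrow> is_adjoint ip C D \<Longrightarrow> is_adjoint ip (\<lambda>x. A (C x)) (\<lambda>x. D (B x))"
  unfolding is_adjoint_def by simp

lemma adjoint_diff: "is_adjoint ip A B \<Longrightarrow> A (x - y) = A x - A y"
  unfolding is_adjoint_def by (rule ip_eqI_left) (simp add: ip_diff_left)

lemma adjoint_zero: "is_adjoint ip A B \<Longrightarrow> A 0 = 0"
  unfolding is_adjoint_def by (rule ip_eqI_left) (simp add: ip_zero_left)

lemma adjoint_sum: "is_adjoint ip A B \<Longrightarrow> A (sum f F) = (\<Sum>a\<in>F. A (f a))"
  unfolding is_adjoint_def by (rule ip_eqI_left) (simp add: ip_sum_left)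

lemma self_adjoint_eqI:
  assumes "is_adjoint ip P P" "is_adjoint ip Q Q"
    and "\<And>x. P x = P (Q x)" "\<And>x. Q x = Q (P x)"
  shows "P y = Q y"
proof (rule ip_eqI_right)
  fix x
  have "ip x (P y) = ip x (P (Q y))" using assms(3) by metis
  also have "\<dots> = ip (Q (P x)) y" using assms(1,2) unfolding is_adjoint_def by metis
  also have "\<dots> = ip x (Q y)" using assms(2,4) unfolding is_adjoint_def by metis
  finally show "ip x (P y) = ip x (Q y)" .
qed

lemma is_projection_partial_isometry:
  assumes "is_adjoint ip A B" "\<And>x. B (A (B x)) = B x"
  shows "is_projection ip (\<lambda>x. B (A x))"
  unfolding is_projection_def
  using is_adjoint_comp[OF is_adjoint_sym[OF assms(1)] assms(1)] assms(2) by simp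

lemma is_projection_complement:
  assumes "is_projection ip P"
  shows "is_projection ip (\<lambda>x. x - P x)"
proof -
  have P: "is_adjoint ip P P" "\<And>x. P (P x) = P x"
    using assms unfolding is_projection_def by auto
  have "is_adjoint ip (\<lambda>x. x - P x) (\<lambda>x. x - P x)"
    using P(1) unfolding is_adjoint_def by (simp add: ip_diff_left ip_diff_right)
  moreover have "x - P x - P (x - P x) = x - P x" for x
    by (simp add: adjoint_diff[OF P(1)] P(2))
  ultimately show ?thesis unfolding is_projection_def by simp
qed

lemma is_projection_sum:
  assumes "finite I" "\<And>i. i \<in> I \<Longrightarrow> is_projection ip (P i)"
    and orth: "\<And>i j x. i \<in> I \<Longrightarrow> j \<in> I \<Longrightarrow> i \<noteq> j \<Longrightarrow> P i (P j x) = 0"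
  shows "is_projection ip (\<lambda>x. \<Sum>i\<in>I. P i x)"
proof -
  have P: "is_adjoint ip (P i) (P i)" "P i (P i x) = P i x" if "i \<in> I" for i x
    using assms(2)[OF that] unfolding is_projection_def by auto
  have "is_adjoint ip (\<lambda>x. \<Sum>i\<in>I. P i x) (\<lambda>x. \<Sum>i\<in>I. P i x)"
    unfolding is_adjoint_def ip_sum_left ip_sum_right
    using P(1) unfolding is_adjoint_def by simp
  moreover have "(\<Sum>i\<in>I. P i (\<Sum>j\<in>I. P j x)) = (\<Sum>i\<in>I. P i x)" for x
  proof (rule sum.cong)
    fix i assume i: "i \<in> I"
    have "P i (\<Sum>j\<in>I. P j x) = (\<Sum>j\<in>I. P i (P j x))" using adjoint_sum[OF P(1)[OF i]] .
    also have "\<dots> = P i (P i x)" by (rule sum_eq_single) (use assms(1) i orth in auto)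
    finally show "P i (\<Sum>j\<in>I. P j x) = P i x" using P(2)[OF i] by simp
  qed simp
  ultimately show ?thesis unfolding is_projection_def by simp
qed

lemma projections_sum_zero:
  assumes "finite I" "\<And>i. i \<in> I \<Longrightarrow> is_projection ip (P i)"
    and "(\<Sum>i\<in>I. P i x) = 0" "i \<in> I"
  shows "P i x = 0"
proof -
  have norm_sq: "ip (P j x) (P j x) = ip x (P j x)" if "j \<in> I" for j
    using assms(2)[OF that] unfolding is_projection_def is_adjoint_def by metis
  have "(\<Sum>j\<in>I. Re (ip (P j x) (P j x))) = Re (ip x (\<Sum>j\<in>I. P j x))"
    by (simp add: norm_sq ip_sum_right)
  also have "\<dots> = 0" using assms(3) by (simp add: ip_zero_right)
  finally have "Re (ip (P i x) (P i x)) = 0"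
    using assms(1,4) by (simp add: sum_nonneg_eq_0_iff ip_self_Re_nonneg)
  then have "ip (P i x) (P i x) = 0" using ip_self_Im by (simp add: complex_eq_iff)
  then show ?thesis by (rule ip_self_eq_zero)
qed

lemma projections_sum_eq_id:
  assumes "finite I" "\<And>i. i \<in> I \<Longrightarrow> is_projection ip (P i)"
    and "(\<Sum>i\<in>I. P i x) = (\<Sum>i\<in>I. x)" "i \<in> I"
  shows "P i x = x"
proof -
  have "(\<Sum>j\<in>I. x - P j x) = 0" using assms(3) by (simp add: sum_subtractf)
  then have "x - P i x = 0"
    using projections_sum_zero[of I "\<lambda>j x. x - P j x"] assms is_projection_complement by blast
  then show ?thesis by simp
qed

end

subsection \<open>Matrices of operators with orthogonal columns\<close>

locale orthogonal_columns = complex_inner_product sc ip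
  for sc :: "complex \<Rightarrow> 'a::ab_group_add \<Rightarrow> 'a" and ip +
  fixes I :: "'i set"
    and U S :: "'i \<Rightarrow> 'i \<Rightarrow> 'a \<Rightarrow> 'a"
  assumes finite_I: "finite I"
    and adjoint: "i \<in> I \<Longrightarrow> k \<in> I \<Longrightarrow> is_adjoint ip (U i k) (S i k)"
    and sum_U_S: "k \<in> I \<Longrightarrow> l \<in> I \<Longrightarrow> (\<Sum>i\<in>I. U i k (S i l x)) = (if k = l then x else 0)"
    and sum_S_U: "k \<in> I \<Longrightarrow> l \<in> I \<Longrightarrow> (\<Sum>i\<in>I. S i l (U i k x)) = (if k = l then x else 0)"
    and column_U_S: "i \<in> I \<Longrightarrow> j \<in> I \<Longrightarrow> k \<in> I \<Longrightarrow> i \<noteq> j \<Longrightarrow> U j k (S i k x) = 0"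
    and column_S_U: "i \<in> I \<Longrightarrow> j \<in> I \<Longrightarrow> k \<in> I \<Longrightarrow> i \<noteq> j \<Longrightarrow> S i k (U j k x) = 0"
begin

lemma dual: "orthogonal_columns sc ip I S U"
proof (intro orthogonal_columns.intro orthogonal_columns_axioms.intro)
  show "complex_inner_product sc ip" "finite I" by (fact complex_inner_product_axioms finite_I)+
  show "is_adjoint ip (S i k) (U i k)" if "i \<in> I" "k \<in> I" for i k
    using adjoint[OF that] by (rule is_adjoint_sym)
  show "(\<Sum>i\<in>I. S i k (U i l x)) = (if k = l then x else 0)"
    and "(\<Sum>i\<in>I. U i l (S i k x)) = (if k = l then x else 0)"
    if "k \<in> I" "l \<in> I" for k l x
    using sum_U_S[OF that(2,1)] sum_S_U[OF that(2,1)] by auto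
  show "S j k (U i k x) = 0" and "U i k (S j k x) = 0"
    if "i \<in> I" "j \<in> I" "k \<in> I" "i \<noteq> j" for i j k x
    using column_S_U[OF that(2,1,3)] column_U_S[OF that(2,1,3)] that(4) by auto
qed

lemma U_sum: "i \<in> I \<Longrightarrow> k \<in> I \<Longrightarrow> U i k (sum f F) = (\<Sum>a\<in>F. U i k (f a))"
  using adjoint by (rule adjoint_sum)

lemma U_zero [simp]: "i \<in> I \<Longrightarrow> k \<in> I \<Longrightarrow> U i k 0 = 0"
  using adjoint by (rule adjoint_zero)

lemma S_sum: "i \<in> I \<Longrightarrow> k \<in> I \<Longrightarrow> S i k (sum f F) = (\<Sum>a\<in>F. S i k (f a))"
  using adjoint is_adjoint_sym by (blast intro: adjoint_sum)

lemma S_zero [simp]: "i \<in> I \<Longrightarrow> k \<in> I \<Longrightarrow> S i k 0 = 0"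
  using adjoint is_adjoint_sym by (blast intro: adjoint_zero)

lemma partial_isometry:
  assumes "i \<in> I" "k \<in> I"
  shows "U i k (S i k (U i k x)) = U i k x"
proof -
  have "U i k x = U i k (\<Sum>m\<in>I. S m k (U m k x))" using sum_S_U[OF assms(2,2)] by simp
  also have "\<dots> = (\<Sum>m\<in>I. U i k (S m k (U m k x)))" using U_sum[OF assms] .
  also have "\<dots> = U i k (S i k (U i k x))"
    by (rule sum_eq_single) (use finite_I assms column_U_S in auto)
  finally show ?thesis by simp
qed

lemma row_U_S:
  assumes "i \<in> I" "k \<in> I" "l \<in> I" "k \<noteq> l"
  shows "U i k (S i l x) = 0"
proof -
  have "S i k (U i k (S i l x)) = (\<Sum>m\<in>I. S i k (U m k (S m l x)))"
    by (rule sum_eq_single[symmetric]) (use finite_I assms column_S_U in auto)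
  also have "\<dots> = S i k (\<Sum>m\<in>I. U m k (S m l x))" by (rule S_sum[OF assms(1,2), symmetric])
  also have "\<dots> = 0" using sum_U_S[OF assms(2,3)] assms by simp
  finally have "U i k (S i k (U i k (S i l x))) = 0" using assms by simp
  then show ?thesis using partial_isometry[OF assms(1,2)] by simp
qed

lemma row_S_U:
  assumes "i \<in> I" "k \<in> I" "l \<in> I" "k \<noteq> l"
  shows "S i l (U i k x) = 0"
  using orthogonal_columns.row_U_S[OF dual] assms by simp

lemma row_sum_S_U:
  assumes "i \<in> I"
  shows "(\<Sum>l\<in>I. S i l (U i l x)) = x"
proof -
  have proj: "is_projection ip (\<lambda>x. S i l (U i l x))" if "i \<in> I" "l \<in> I" for i l
    using adjoint[OF that] orthogonal_columns.partial_isometry[OF dual that]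
    by (rule is_projection_partial_isometry)
  have row_proj: "is_projection ip (\<lambda>x. \<Sum>l\<in>I. S i l (U i l x))" if "i \<in> I" for i
    by (rule is_projection_sum) (use finite_I proj that row_U_S in auto)
  have "(\<Sum>i\<in>I. \<Sum>l\<in>I. S i l (U i l x)) = (\<Sum>l\<in>I. \<Sum>i\<in>I. S i l (U i l x))"
    by (rule sum.swap)
  also have "\<dots> = (\<Sum>l\<in>I. x)" using sum_S_U by simp
  finally have "(\<Sum>i\<in>I. \<Sum>l\<in>I. S i l (U i l x)) = (\<Sum>i\<in>I. x)" .
  then show ?thesis
    using projections_sum_eq_id[where P="\<lambda>i x. \<Sum>l\<in>I. S i l (U i l x)", OF finite_I row_proj]
      assms by simp
qed

lemma row_sum_U_S:
  assumes "i \<in> I"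
  shows "(\<Sum>l\<in>I. U i l (S i l x)) = x"
  using orthogonal_columns.row_sum_S_U[OF dual] assms .

end

locale row_commuting_columns = orthogonal_columns +
  fixes w :: "'i \<Rightarrow> 'i \<Rightarrow> complex"
  assumes row_commute:
    "i \<in> I \<Longrightarrow> k \<in> I \<Longrightarrow> l \<in> I \<Longrightarrow> U i k (U i l x) = sc (w k l) (U i l (U i k x))"
begin

lemma row_U_U:
  assumes "i \<in> I" "k \<in> I" "l \<in> I" "k \<noteq> l"
  shows "U i k (U i l x) = 0"
proof -
  have "ip (U i k (U i l x)) (U i k (U i l x)) = cnj (w k l) * ip (U i k (U i l x)) (U i l (U i k x))"
    by (subst (2) row_commute[OF assms(1-3)]) (simp add: ip_scale_right)
  also have "\<dots> = cnj (w k l) * ip (U i l x) (S i k (U i l (U i k x)))"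
    using adjoint[OF assms(1,2)] unfolding is_adjoint_def by simp
  also have "\<dots> = 0" using row_S_U[OF assms(1,3,2)] assms by (simp add: ip_zero_right)
  finally show ?thesis by (rule ip_self_eq_zero)
qed

lemma row_S_S:
  assumes "i \<in> I" "k \<in> I" "l \<in> I" "k \<noteq> l"
  shows "S i k (S i l x) = 0"
proof (rule ip_eqI_right)
  fix y
  have "ip y (S i k (S i l x)) = ip (U i l (U i k y)) x"
    using adjoint[OF assms(1,2)] adjoint[OF assms(1,3)] unfolding is_adjoint_def by simp
  also have "\<dots> = ip y 0" using row_U_U[OF assms(1,3,2)] assms by (simp add: ip_zero_left ip_zero_right)
  finally show "ip y (S i k (S i l x)) = ip y 0" .
qed

theorem normal:
  assumes "i \<in> I" "k \<in> I"
  shows "U i k \<circ> S i k = S i k \<circ> U i k"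
proof
  fix y
  have P_eq_PQ: "U i k (S i k x) = U i k (S i k (S i k (U i k x)))" for x
  proof -
    have "U i k (S i k x) = (\<Sum>l\<in>I. U i k (S i k (S i l (U i l x))))"
      using row_sum_S_U[OF assms(1), of x] U_sum[OF assms] S_sum[OF assms] by metis
    also have "\<dots> = U i k (S i k (S i k (U i k x)))"
      by (rule sum_eq_single) (use finite_I assms row_S_S in auto)
    finally show ?thesis .
  qed
  have Q_eq_QP: "S i k (U i k x) = S i k (U i k (U i k (S i k x)))" for x
  proof -
    have "S i k (U i k x) = (\<Sum>l\<in>I. S i k (U i k (U i l (S i l x))))"
      using row_sum_U_S[OF assms(1), of x] U_sum[OF assms] S_sum[OF assms] by metis
    also have "\<dots> = S i k (U i k (U i k (S i k x)))"
      by (rule sum_eq_single) (use finite_I assms row_U_U in auto)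
    finally show ?thesis .
  qed
  have "is_adjoint ip (\<lambda>x. U i k (S i k x)) (\<lambda>x. U i k (S i k x))"
    "is_adjoint ip (\<lambda>x. S i k (U i k x)) (\<lambda>x. S i k (U i k x))"
    using is_adjoint_comp adjoint[OF assms] is_adjoint_sym by blast+
  then show "(U i k \<circ> S i k) y = (S i k \<circ> U i k) y"
    unfolding comp_def using P_eq_PQ Q_eq_QP by (rule self_adjoint_eqI)
qed

end

theorem proposition3p14:
  fixes sc :: "complex \<Rightarrow> 'a::ab_group_add \<Rightarrow> 'a"
    and ip :: "'a \<Rightarrow> 'a \<Rightarrow> complex"
    and n :: nat
    and \<theta> :: "nat \<Rightarrow> nat \<Rightarrow> real"
    and U Ustar :: "nat \<Rightarrow> nat \<Rightarrow> 'a \<Rightarrow> 'a"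
  defines "\<omega> \<equiv> (\<lambda>i j. cis (2 * pi * \<theta> i j))"
  assumes H: "hilbert_space sc ip"
    and n2: "n \<ge> 2"
    and skew: "\<forall>i\<in>{1..n}. \<forall>j\<in>{1..n}. \<theta> j i = - \<theta> i j"
    and bdd: "\<forall>i\<in>{1..n}. \<forall>k\<in>{1..n}. bounded_op sc ip (U i k)"
    and adj: "\<forall>i\<in>{1..n}. \<forall>k\<in>{1..n}. is_adjoint ip (U i k) (Ustar i k)"
    and R1: "\<forall>i\<in>{1..n}. \<forall>j\<in>{1..n}. \<forall>k\<in>{1..n}. \<forall>l\<in>{1..n}.
      (\<lambda>x. U i k (U j l x) + sc (\<omega> j i) (U j k (U i l x))) =
      (\<lambda>x. sc (\<omega> k l) (U i l (U j k x)) + sc (\<omega> j i * \<omega> k l) (U j l (U i k x)))"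
    and R2: "\<forall>k\<in>{1..n}. \<forall>l\<in>{1..n}.
      (\<lambda>x. \<Sum>i\<in>{1..n}. U i k (Ustar i l x)) = (\<lambda>x. if k = l then x else 0)"
    and R3: "\<forall>k\<in>{1..n}. \<forall>l\<in>{1..n}.
      (\<lambda>x. \<Sum>i\<in>{1..n}. Ustar i l (U i k x)) = (\<lambda>x. if k = l then x else 0)"
    and R4: "\<forall>i\<in>{1..n}. \<forall>j\<in>{1..n}. \<forall>k\<in>{1..n}. i \<noteq> j \<longrightarrow>
      (\<lambda>x. U j k (Ustar i k x)) = (\<lambda>x. 0)"
    and R5: "\<forall>i\<in>{1..n}. \<forall>j\<in>{1..n}. \<forall>k\<in>{1..n}. i \<noteq> j \<longrightarrow>
      (\<lambda>x. Ustar i k (U j k x)) = (\<lambda>x. 0)"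
  shows "\<forall>i\<in>{1..n}. \<forall>k\<in>{1..n}. U i k \<circ> Ustar i k = Ustar i k \<circ> U i k"
proof -
  interpret complex_inner_product sc ip
    using H by (rule hilbert_space_complex_inner_product)
  have \<omega>_diag: "\<omega> i i = 1" if "i \<in> {1..n}" for i
  proof -
    have "\<theta> i i = - \<theta> i i" using skew that by blast
    then show ?thesis by (simp add: \<omega>_def)
  qed
  interpret row_commuting_columns sc ip "{1..n}" U Ustar \<omega>
  proof (intro row_commuting_columns.intro orthogonal_columns.intro
      orthogonal_columns_axioms.intro row_commuting_columns_axioms.intro)
    show "complex_inner_product sc ip" "finite {1..n}"
      by (fact complex_inner_product_axioms finite_atLeastAtMost)+
    show "is_adjoint ip (U i k) (Ustar i k)" if "i \<in> {1..n}" "k \<in> {1..n}" for i k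
      using adj that by blast
    show "(\<Sum>i\<in>{1..n}. U i k (Ustar i l x)) = (if k = l then x else 0)"
      and "(\<Sum>i\<in>{1..n}. Ustar i l (U i k x)) = (if k = l then x else 0)"
      if "k \<in> {1..n}" "l \<in> {1..n}" for k l x
      using fun_cong[OF R2[rule_format, OF that]] fun_cong[OF R3[rule_format, OF that]] by simp_all
    show "U j k (Ustar i k x) = 0" and "Ustar i k (U j k x) = 0"
      if "i \<in> {1..n}" "j \<in> {1..n}" "k \<in> {1..n}" "i \<noteq> j" for i j k x
      using fun_cong[OF R4[rule_format, OF that]] fun_cong[OF R5[rule_format, OF that]] by simp_all
    show "U i k (U i l x) = sc (\<omega> k l) (U i l (U i k x))"
      if "i \<in> {1..n}" "k \<in> {1..n}" "l \<in> {1..n}" for i k l x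
    proof (rule double_cancel)
      show "U i k (U i l x) + U i k (U i l x) =
          sc (\<omega> k l) (U i l (U i k x)) + sc (\<omega> k l) (U i l (U i k x))"
        using fun_cong[OF R1[rule_format, OF that(1,1,2,3)], of x] \<omega>_diag[OF that(1)]
        by (simp add: scale_one)
    qed
  qed
  show ?thesis using normal by blast
qed

end
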